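(* Let $\alpha\ge0$, $1<p<\infty$ and $\frac1p+\frac1{p'}=1$. For $t\ge0$ let $T_{t,p}f(s)=e^{-t/p}f(e^{-t}s)$ on $\mathcal{T}_p^{(\alpha)}(t^\alpha)$ and $T_{-t,p'}g(s)=e^{t/p'}g(e^{t}s)$ on $\mathcal{T}_{p'}^{(\alpha)}(t^\alpha)$. Then the semigroups $(T_{t,p})_{t\ge0}$ and $(T_{-t,p'})_{t\ge0}$ are dual to each other, i.e. $$\langle T_{t,p}f,g\rangle_\alpha=\langle f,T_{-t,p'}g\rangle_\alpha,\qquad f\in\mathcal{T}_p^{(\alpha)}(t^\alpha),\ g\in\mathcal{T}_{p'}^{(\alpha)}(t^\alpha),\ t\ge0.$$
   Context: $\mathcal{S}_+$ denotes the Schwartz class on $[0,\infty)$. For $\alpha>0$ and $f\in\mathcal{S}_+$, the Weyl fractional integral is $W_+^{-\alpha}f(t)=\frac{1}{\Gamma(\alpha)}\int_t^\infty (s-t)^{\alpha-1}f(s)\,ds$ ($t>0$), and the Weyl fractional derivative is $W_+^{\alpha}f(t)=(-1)^n\frac{d^n}{dt^n}W_+^{-(n-\alpha)}f(t)$ with $n=[\alpha]+1$; $W_+^0$ is the identity. For $\alpha>0$ and $1\le p<\infty$, $\mathcal{T}_p^{(\alpha)}(t^\alpha)$ is the completion of $\mathcal{S}_+$ in the norm $\|f\|_{\alpha,p}=\frac{1}{\Gamma(\alpha+1)}\left(\int_0^\infty |W_+^\alpha f(t)|^p t^{\alpha p}\,dt\right)^{1/p}$; $\mathcal{T}_p^{(0)}(t^0)=L^p(\mathbb{R}^+)$.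 For $p>1$ the dual of $\mathcal{T}_p^{(\alpha)}(t^\alpha)$ is $\mathcal{T}_{p'}^{(\alpha)}(t^\alpha)$ via the pairing $\langle f,g\rangle_\alpha=\frac{1}{\Gamma(\alpha+1)^2}\int_0^\infty W_+^\alpha f(t)\,W_+^\alpha g(t)\,t^{2\alpha}\,dt$. *)

theory Defs
  imports "HOL-Analysis.Analysis"
begin

text \<open>Schwartz class on [0,\<infinity>): smooth on [0,\<infinity>) (one-sided derivative at 0),
  every derivative rapidly decreasing.  Values on negative reals are irrelevant.\<close>
definition schwartz_plus :: "(real \<Rightarrow> real) set" where
  "schwartz_plus = {f. \<exists>D :: nat \<Rightarrow> real \<Rightarrow> real.
      (\<forall>s\<ge>0. D 0 s = f s) \<and>
      (\<forall>n. \<forall>s\<ge>0. (D n has_real_derivative D (Suc n) s) (at s within {0..})) \<and>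
      (\<forall>k n. \<exists>C. \<forall>s\<ge>0. \<bar>s ^ k * D n s\<bar> \<le> C)}"

definition weyl_int :: "real \<Rightarrow> (real \<Rightarrow> real) \<Rightarrow> real \<Rightarrow> real" where
  "weyl_int \<alpha> f t = (1 / Gamma \<alpha>) * (LBINT s:{t<..}. (s - t) powr (\<alpha> - 1) * f s)"

definition weyl_der :: "real \<Rightarrow> (real \<Rightarrow> real) \<Rightarrow> real \<Rightarrow> real" where
  "weyl_der \<alpha> f t =
     (if \<alpha> = 0 then f t
      else (let n = nat \<lfloor>\<alpha>\<rfloor> + 1 in
            (-1) ^ n * (deriv ^^ n) (weyl_int (real n - \<alpha>) f) t))"

definition tnorm :: "real \<Rightarrow> real \<Rightarrow> (real \<Rightarrow> real) \<Rightarrow> real" where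
  "tnorm \<alpha> p f = (1 / Gamma (\<alpha> + 1)) *
     (LBINT s:{0<..}. \<bar>weyl_der \<alpha> f s\<bar> powr p * s powr (\<alpha> * p)) powr (1 / p)"

definition tpair :: "real \<Rightarrow> (real \<Rightarrow> real) \<Rightarrow> (real \<Rightarrow> real) \<Rightarrow> real" where
  "tpair \<alpha> f g = (1 / (Gamma (\<alpha> + 1))\<^sup>2) *
     (LBINT s:{0<..}. weyl_der \<alpha> f s * weyl_der \<alpha> g s * s powr (2 * \<alpha>))"

text \<open>Cauchy sequences of Schwartz functions for the norm tnorm \<alpha> p;
  these represent the elements of the completion T_p^{(\<alpha>)}(t^\<alpha>).\<close>
definition tcauchy :: "real \<Rightarrow> real \<Rightarrow> (nat \<Rightarrow> real \<Rightarrow> real) \<Rightarrow> bool" where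
  "tcauchy \<alpha> p f \<longleftrightarrow> (\<forall>n. f n \<in> schwartz_plus) \<and>
     (\<forall>e>0. \<exists>N. \<forall>m\<ge>N. \<forall>n\<ge>N. tnorm \<alpha> p (\<lambda>s. f m s - f n s) < e)"

definition Tpos :: "real \<Rightarrow> real \<Rightarrow> (real \<Rightarrow> real) \<Rightarrow> real \<Rightarrow> real" where
  "Tpos t p f s = exp (- t / p) * f (exp (- t) * s)"

definition Tneg :: "real \<Rightarrow> real \<Rightarrow> (real \<Rightarrow> real) \<Rightarrow> real \<Rightarrow> real" where
  "Tneg t p' g s = exp (t / p') * g (exp t * s)"

end

theory Submission
  imports Defs
begin

text \<open>On Schwartz functions the Weyl derivative has the explicit form
  W^\<alpha> f = (-1)^n W^-(n-\<alpha>) f^(n) with n = \<lfloor>\<alpha>\<rfloor> + 1, which shows that it commutes with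
  dilations: W^\<alpha>(a f(c \<cdot>))(s) = a c^\<alpha> (W^\<alpha> f)(c s). So s^\<alpha> W^\<alpha> of T_{t,p} f and of
  T_{-t,p'} g are rescaled copies of s^\<alpha> W^\<alpha> f and s^\<alpha> W^\<alpha> g, and the substitution
  s \<mapsto> e^t s turns \<langle>T_{t,p} f, g\<rangle> into \<langle>f, T_{-t,p'} g\<rangle> exactly, since e^(-t/p) e^t = e^(t/p').
  On the completions, T_{-t,p'} is an isometry, so it maps Cauchy sequences to Cauchy
  sequences, and by H\<ouml>lder's inequality the pairing of a p-Cauchy and a p'-Cauchy sequence
  converges. The two sequences of pairings agree termwise, hence share their limit.\<close>

section \<open>Integrals over (0,\<infinity>)\<close>

lemma set_integrable_lborel_of_lebesgue:
  fixes f :: "real \<Rightarrow> real"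
  assumes "set_integrable lebesgue A f" "A \<in> sets borel" "continuous_on A f"
  shows "set_integrable lborel A f"
proof -
  have "(\<lambda>x. indicator A x *\<^sub>R f x) \<in> borel_measurable lborel"
    using borel_measurable_continuous_on_indicator[OF assms(2,3)] by simp
  then show ?thesis using assms(1) integrable_completion unfolding set_integrable_def by blast
qed

lemma Ioi_kernel_integrable_Ioc_0_1:
  assumes "0 < b"
  shows "(\<lambda>u::real. u powr (b-1) / (1+u)^2) absolutely_integrable_on {0<..1}"
  unfolding set_integrable_def
proof (rule Bochner_Integration.integrable_bound [OF _ _ AE_I2])
  show "integrable lebesgue (\<lambda>x. indicat_real {0<..1} x *\<^sub>R x powr (b - 1))"
    using assms
    by (intro nonnegative_absolutely_integrable_1 [unfolded set_integrable_def]
          integrable_on_powr_from_0') auto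
  show "(\<lambda>x. indicat_real {0<..1} x *\<^sub>R (x powr (b - 1) / (1 + x)^2)) \<in> borel_measurable lebesgue"
    by (intro measurable_completion)
       (auto intro!: borel_measurable_continuous_on_indicator continuous_intros)
  fix x :: real
  have "x powr (b - 1) / (1 + x)^2 \<le> x powr (b - 1) / 1" if "x \<ge> 0"
    using that by (intro divide_left_mono) (auto intro!: one_le_power)
  then show "norm (indicator {0<..1} x *\<^sub>R (x powr (b - 1) / (1 + x)^2)) \<le>
             norm (indicator {0<..1} x *\<^sub>R x powr (b - 1))"
    by (simp add: indicator_def)
qed

lemma Ioi_kernel_integrable_Ici_1:
  assumes "b \<le> 1"
  shows "(\<lambda>u::real. u powr (b-1) / (1+u)^2) absolutely_integrable_on {1..}"
  unfolding set_integrable_def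
proof (rule Bochner_Integration.integrable_bound [OF _ _ AE_I2])
  have "(\<lambda>x::real. x powr (-2)) integrable_on {1..}"
    using has_integral_powr_to_inf[of "-2" 1] unfolding integrable_on_def by auto
  then show "integrable lebesgue (\<lambda>x. indicat_real {1..} x *\<^sub>R x powr (-2::real))"
    by (intro nonnegative_absolutely_integrable_1 [unfolded set_integrable_def]) auto
  show "(\<lambda>x. indicat_real {1..} x *\<^sub>R (x powr (b - 1) / (1 + x)^2)) \<in> borel_measurable lebesgue"
    by (intro measurable_completion)
       (auto intro!: borel_measurable_continuous_on_indicator continuous_intros)
  fix x :: real
  have "x powr (b - 1) / (1 + x)^2 \<le> x powr (-2)" if "x \<ge> 1"
  proof -
    have "x powr (b - 1) \<le> 1" using that assms powr_mono[of "b-1" 0 x] by simp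
    moreover have "1 / (1+x)^2 \<le> x powr (-2::real)"
      using that by (simp add: powr_minus_divide powr_realpow divide_simps power2_eq_square)
         (smt (verit) mult_mono)
    ultimately show ?thesis
      using that by (smt (verit) divide_right_mono zero_le_power2)
  qed
  then show "norm (indicator {1..} x *\<^sub>R (x powr (b - 1) / (1 + x)^2)) \<le>
             norm (indicator {1..} x *\<^sub>R x powr (-2::real))"
    by (auto simp: indicator_def)
qed

lemma Ioi_kernel_integrable:
  assumes "0 < b" "b \<le> 1"
  shows "set_integrable lborel {0<..} (\<lambda>u::real. u powr (b-1) / (1+u)^2)"
proof (rule set_integrable_lborel_of_lebesgue)
  have "(\<lambda>u::real. u powr (b-1) / (1+u)^2) absolutely_integrable_on ({0<..1} \<union> {1..})"
    using assms by (intro set_integrable_Un Ioi_kernel_integrable_Ioc_0_1 Ioi_kernel_integrable_Ici_1) auto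
  also have "{0<..1} \<union> {1..} = ({0<..}::real set)" by auto
  finally show "set_integrable lebesgue {0<..} (\<lambda>u::real. u powr (b-1) / (1+u)^2)" .
  show "continuous_on {0<..} (\<lambda>u::real. u powr (b-1) / (1+u)^2)"
    by (intro continuous_intros) auto
qed auto

lemma set_integral_Ioi_dilate:
  fixes \<phi> :: "real \<Rightarrow> real"
  assumes "c > 0"
  shows "(LBINT s:{0<..}. \<phi> (c * s)) = (LBINT s:{0<..}. \<phi> s) / c"
proof -
  have "(LBINT s:{0<..}. \<phi> s)
      = \<bar>c\<bar> *\<^sub>R (\<integral>x. indicator {0<..} (0 + c * x) *\<^sub>R \<phi> (0 + c * x) \<partial>lborel)"
    unfolding set_lebesgue_integral_def
    by (rule lborel_integral_real_affine) (use assms in auto)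
  also have "(\<lambda>x. indicator {0<..} (0 + c * x) *\<^sub>R \<phi> (0 + c * x))
           = (\<lambda>x. indicator {0<..} x *\<^sub>R \<phi> (c * x))"
    using assms by (auto simp: indicator_def zero_less_mult_iff fun_eq_iff)
  finally show ?thesis using assms unfolding set_lebesgue_integral_def by simp
qed

lemma set_integral_Ioi_shift:
  fixes \<psi> :: "real \<Rightarrow> real"
  shows "(LBINT s:{t<..}. \<psi> s) = (LBINT u:{0<..}. \<psi> (t + u))"
proof -
  have "(LBINT s:{t<..}. \<psi> s)
      = \<bar>1\<bar> *\<^sub>R (\<integral>x. indicator {t<..} (t + 1 * x) *\<^sub>R \<psi> (t + 1 * x) \<partial>lborel)"
    unfolding set_lebesgue_integral_def by (rule lborel_integral_real_affine) auto
  also have "(\<lambda>x. indicator {t<..} (t + 1 * x) *\<^sub>R \<psi> (t + 1 * x))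
           = (\<lambda>x. indicator {0<..} x *\<^sub>R \<psi> (t + x))"
    by (auto simp: indicator_def fun_eq_iff)
  finally show ?thesis unfolding set_lebesgue_integral_def by simp
qed

definition Ioi_kernel_mass :: "real \<Rightarrow> real" where
  "Ioi_kernel_mass b = (LBINT u:{0<..}. u powr (b-1) / (1+u)^2)"

lemma Ioi_kernel_mass_nonneg: "Ioi_kernel_mass b \<ge> 0"
  unfolding Ioi_kernel_mass_def set_lebesgue_integral_def
  by (intro Bochner_Integration.integral_nonneg) (auto simp: indicator_def)

lemma set_integrable_Ioi_kernel_bound:
  fixes g :: "real \<Rightarrow> real"
  assumes "0 < b" "b \<le> 1" "continuous_on {0<..} g"
    and "\<And>u. u > 0 \<Longrightarrow> \<bar>g u\<bar> \<le> M * (u powr (b-1) / (1+u)^2)"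
  shows "set_integrable lborel {0<..} g"
proof (rule set_integrable_bound[OF set_integrable_mult_right[OF Ioi_kernel_integrable[OF assms(1,2)]]])
  show "set_borel_measurable lborel {0<..} g"
    unfolding set_borel_measurable_def
    using borel_measurable_continuous_on_indicator[OF _ assms(3)] by simp
  show "AE x in lborel. x \<in> {0<..} \<longrightarrow> norm (g x) \<le> norm (M * (x powr (b - 1) / (1 + x)^2))"
  proof (intro AE_I2 impI)
    fix x :: real assume "x \<in> {0<..}"
    then have "\<bar>g x\<bar> \<le> M * (x powr (b-1) / (1+x)^2)" using assms(4) by simp
    then show "norm (g x) \<le> norm (M * (x powr (b - 1) / (1 + x)^2))"
      by (simp del: times_divide_eq_right)
  qed
qed

lemma set_integral_Ioi_kernel_bound:
  fixes g :: "real \<Rightarrow> real"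
  assumes "0 < b" "b \<le> 1" "continuous_on {0<..} g"
    and "\<And>u. u > 0 \<Longrightarrow> \<bar>g u\<bar> \<le> M * (u powr (b-1) / (1+u)^2)"
  shows "\<bar>LBINT u:{0<..}. g u\<bar> \<le> M * Ioi_kernel_mass b"
proof -
  have g: "set_integrable lborel {0<..} g" by (rule set_integrable_Ioi_kernel_bound[OF assms])
  have "\<bar>LBINT u:{0<..}. g u\<bar> \<le> (LBINT u:{0<..}. \<bar>g u\<bar>)"
    using set_integral_norm_bound[OF g] by simp
  also have "\<dots> \<le> (LBINT u:{0<..}. M * (u powr (b-1) / (1+u)^2))"
    using assms(4) Ioi_kernel_integrable[OF assms(1,2)]
    by (intro set_integral_mono set_integrable_abs[OF g] set_integrable_mult_right) auto
  also have "\<dots> = M * Ioi_kernel_mass b"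
    unfolding Ioi_kernel_mass_def by (rule set_integral_mult_right)
  finally show ?thesis .
qed

section \<open>Towers of derivatives of Schwartz functions\<close>

definition schwartz_tower :: "(nat \<Rightarrow> real \<Rightarrow> real) \<Rightarrow> (real \<Rightarrow> real) \<Rightarrow> bool" where
  "schwartz_tower D f \<longleftrightarrow> (\<forall>s\<ge>0. D 0 s = f s) \<and>
      (\<forall>n. \<forall>s\<ge>0. (D n has_real_derivative D (Suc n) s) (at s within {0..})) \<and>
      (\<forall>k n. \<exists>C. \<forall>s\<ge>0. \<bar>s ^ k * D n s\<bar> \<le> C)"

lemma schwartz_plus_iff_tower: "f \<in> schwartz_plus \<longleftrightarrow> (\<exists>D. schwartz_tower D f)"
  unfolding schwartz_plus_def schwartz_tower_def by blast

lemma schwartz_tower_decay: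
  assumes "schwartz_tower D f"
  shows "\<exists>C. \<forall>s\<ge>0. \<bar>D n s\<bar> \<le> C / (1+s)^K"
proof -
  have "\<forall>j. \<exists>C. \<forall>s\<ge>0. \<bar>s ^ j * D n s\<bar> \<le> C"
    using assms unfolding schwartz_tower_def by blast
  then obtain C where C: "\<And>j s. s \<ge> 0 \<Longrightarrow> \<bar>s ^ j * D n s\<bar> \<le> C j"
    by metis
  have "\<bar>D n s\<bar> \<le> (\<Sum>j\<le>K. of_nat (K choose j) * C j) / (1+s)^K" if "s \<ge> 0" for s
  proof -
    have "(1+s)^K = (\<Sum>j\<le>K. of_nat (K choose j) * s^j)"
      using binomial_ring[of s 1 K] by (simp add: add.commute)
    then have "\<bar>D n s\<bar> * (1+s)^K = (\<Sum>j\<le>K. of_nat (K choose j) * \<bar>s^j * D n s\<bar>)"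
      using that by (simp add: sum_distrib_left abs_mult mult_ac)
    also have "\<dots> \<le> (\<Sum>j\<le>K. of_nat (K choose j) * C j)"
      by (intro sum_mono mult_left_mono C that) auto
    finally have "\<bar>D n s\<bar> * (1+s)^K \<le> (\<Sum>j\<le>K. of_nat (K choose j) * C j)" .
    moreover have "(1+s)^K > 0" using that by simp
    ultimately show ?thesis by (simp only: pos_le_divide_eq)
  qed
  then show ?thesis by blast
qed

lemma schwartz_tower_deriv_within:
  "schwartz_tower D f \<Longrightarrow> s \<ge> 0 \<Longrightarrow> (D n has_real_derivative D (Suc n) s) (at s within {0..})"
  unfolding schwartz_tower_def by blast

lemma schwartz_tower_deriv_at:
  assumes "schwartz_tower D f" "s > 0"
  shows "(D n has_real_derivative D (Suc n) s) (at s)"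
proof -
  have "at s within {0..} = at s"
    using assms(2) by (intro at_within_interior) simp
  then show ?thesis using schwartz_tower_deriv_within[OF assms(1), of s n] assms(2) by simp
qed

lemma schwartz_tower_continuous_on: "schwartz_tower D f \<Longrightarrow> continuous_on {0..} (D n)"
  by (rule DERIV_continuous_on[OF schwartz_tower_deriv_within]) auto

lemma schwartz_tower_diff:
  assumes "schwartz_tower D f" "schwartz_tower E g"
  shows "schwartz_tower (\<lambda>n s. D n s - E n s) (\<lambda>s. f s - g s)"
  unfolding schwartz_tower_def
proof (intro conjI allI impI)
  fix s :: real assume "s \<ge> 0"
  then show "D 0 s - E 0 s = f s - g s" using assms unfolding schwartz_tower_def by auto
next
  fix n and s :: real assume "s \<ge> 0"
  then show "((\<lambda>s. D n s - E n s) has_real_derivative D (Suc n) s - E (Suc n) s) (at s within {0..})"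
    using assms by (intro DERIV_diff schwartz_tower_deriv_within) auto
next
  fix k n
  obtain C1 where C1: "\<And>s. s \<ge> 0 \<Longrightarrow> \<bar>s ^ k * D n s\<bar> \<le> C1"
    using assms(1) unfolding schwartz_tower_def by blast
  obtain C2 where C2: "\<And>s. s \<ge> 0 \<Longrightarrow> \<bar>s ^ k * E n s\<bar> \<le> C2"
    using assms(2) unfolding schwartz_tower_def by blast
  have "\<bar>s ^ k * (D n s - E n s)\<bar> \<le> C1 + C2" if "s \<ge> 0" for s
    using C1[OF that] C2[OF that] abs_triangle_ineq4[of "s ^ k * D n s" "s ^ k * E n s"]
    by (simp add: right_diff_distrib)
  then show "\<exists>C. \<forall>s\<ge>0. \<bar>s ^ k * (D n s - E n s)\<bar> \<le> C" by blast
qed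

lemma schwartz_tower_dilate:
  assumes "schwartz_tower D f" "c > 0"
  shows "schwartz_tower (\<lambda>n s. a * c^n * D n (c * s)) (\<lambda>s. a * f (c * s))"
  unfolding schwartz_tower_def
proof (intro conjI allI impI)
  fix s :: real assume "s \<ge> 0"
  then show "a * c^0 * D 0 (c * s) = a * f (c * s)" using assms unfolding schwartz_tower_def by auto
next
  fix n and s :: real assume s: "s \<ge> 0"
  have "(D n has_real_derivative D (Suc n) (c * s)) (at (c * s) within (\<lambda>s. c * s) ` {0..})"
    by (rule DERIV_subset[OF schwartz_tower_deriv_within[OF assms(1)]]) (use s assms in auto)
  moreover have "((\<lambda>s. c * s) has_real_derivative c) (at s within {0..})"
    by (auto intro!: derivative_eq_intros)
  ultimately have "((\<lambda>s. D n s) \<circ> (\<lambda>s. c * s) has_real_derivative D (Suc n) (c * s) * c)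
                    (at s within {0..})"
    by (rule DERIV_image_chain)
  then have "((\<lambda>s. D n (c * s)) has_real_derivative D (Suc n) (c * s) * c) (at s within {0..})"
    by (simp add: o_def)
  from DERIV_cmult[OF this, of "a * c^n"]
  show "((\<lambda>s. a * c^n * D n (c * s)) has_real_derivative a * c^Suc n * D (Suc n) (c * s))
          (at s within {0..})"
    by (simp add: mult_ac)
next
  fix k n
  obtain C where C: "\<And>s. s \<ge> 0 \<Longrightarrow> \<bar>s ^ k * D n s\<bar> \<le> C"
    using assms(1) unfolding schwartz_tower_def by blast
  have "\<bar>s ^ k * (a * c^n * D n (c * s))\<bar> \<le> \<bar>a\<bar> * c^n / c^k * C" if "s \<ge> 0" for s
  proof -
    have "\<bar>s ^ k * (a * c^n * D n (c * s))\<bar> = \<bar>a\<bar> * c^n / c^k * \<bar>(c * s) ^ k * D n (c * s)\<bar>"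
      using assms(2) by (simp add: abs_mult power_mult_distrib field_simps)
    also have "\<dots> \<le> \<bar>a\<bar> * c^n / c^k * C"
      using assms(2) that by (intro mult_left_mono C) auto
    finally show ?thesis .
  qed
  then show "\<exists>C. \<forall>s\<ge>0. \<bar>s ^ k * (a * c^n * D n (c * s))\<bar> \<le> C" by blast
qed

lemma schwartz_plus_diff:
  "f \<in> schwartz_plus \<Longrightarrow> g \<in> schwartz_plus \<Longrightarrow> (\<lambda>s. f s - g s) \<in> schwartz_plus"
  unfolding schwartz_plus_iff_tower using schwartz_tower_diff by blast

lemma schwartz_plus_dilate:
  "f \<in> schwartz_plus \<Longrightarrow> c > 0 \<Longrightarrow> (\<lambda>s. a * f (c * s)) \<in> schwartz_plus"
  unfolding schwartz_plus_iff_tower using schwartz_tower_dilate by blast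

section \<open>Weyl integrals and derivatives of Schwartz functions\<close>

text \<open>weyl_tail D b m s is \<Gamma>(b) W^-b(D m)(s), after the substitution u = s' - s.\<close>
definition weyl_tail :: "(nat \<Rightarrow> real \<Rightarrow> real) \<Rightarrow> real \<Rightarrow> nat \<Rightarrow> real \<Rightarrow> real" where
  "weyl_tail D b m s = (LBINT u:{0<..}. u powr (b-1) * D m (s+u))"

lemma weyl_tail_integrand_continuous:
  assumes "schwartz_tower D f" "s \<ge> 0"
  shows "continuous_on {0<..} (\<lambda>u. u powr (b-1) * D m (s+u))"
proof (intro continuous_on_mult)
  show "continuous_on {0<..} (\<lambda>u::real. u powr (b-1))"
    by (intro continuous_intros) auto
  show "continuous_on {0<..} (\<lambda>u. D m (s+u))"
    by (rule continuous_on_compose2[OF schwartz_tower_continuous_on[OF assms(1)]])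
       (use assms(2) in \<open>auto intro!: continuous_intros\<close>)
qed

lemma weyl_tail_integrand_bound:
  assumes "schwartz_tower D f"
  shows "\<exists>C. \<forall>s\<ge>0. \<forall>u>0.
           \<bar>u powr (b-1) * D m (s+u)\<bar> \<le> C / (1+s)^K * (u powr (b-1) / (1+u)^2)"
proof -
  obtain C where C: "\<And>x. x \<ge> 0 \<Longrightarrow> \<bar>D m x\<bar> \<le> C / (1+x)^(K+2)"
    using schwartz_tower_decay[OF assms] by blast
  have "\<bar>u powr (b-1) * D m (s+u)\<bar> \<le> C / (1+s)^K * (u powr (b-1) / (1+u)^2)"
    if s: "s \<ge> 0" and u: "u > 0" for s u
  proof -
    have C0: "C \<ge> 0" using C[of 0] abs_ge_zero[of "D m 0"] by simp
    have "(1+s)^K * (1+u)^2 \<le> (1+(s+u))^K * (1+(s+u))^2"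
      using s u by (intro mult_mono power_mono) auto
    also have "\<dots> = (1+(s+u))^(K+2)" by (rule power_add[symmetric])
    finally have "C / (1+(s+u))^(K+2) \<le> C / ((1+s)^K * (1+u)^2)"
      using s u C0 by (intro divide_left_mono) auto
    then have "\<bar>D m (s+u)\<bar> \<le> C / ((1+s)^K * (1+u)^2)" using C[of "s+u"] s u by simp
    then have "u powr (b-1) * \<bar>D m (s+u)\<bar> \<le> u powr (b-1) * (C / ((1+s)^K * (1+u)^2))"
      by (intro mult_left_mono) auto
    then show ?thesis by (simp add: abs_mult mult.commute)
  qed
  then show ?thesis by blast
qed

lemma weyl_tail_integrable:
  assumes "schwartz_tower D f" "s \<ge> 0" "0 < b" "b \<le> 1"
  shows "set_integrable lborel {0<..} (\<lambda>u. u powr (b-1) * D m (s+u))"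
proof -
  obtain C where "\<forall>u>0. \<bar>u powr (b-1) * D m (s+u)\<bar> \<le> C / (1+s)^0 * (u powr (b-1) / (1+u)^2)"
    using weyl_tail_integrand_bound[OF assms(1)] assms(2) by blast
  then show ?thesis
    using set_integrable_Ioi_kernel_bound[OF assms(3,4) weyl_tail_integrand_continuous[OF assms(1,2)]]
    by blast
qed

lemma weyl_tail_decay:
  assumes "schwartz_tower D f" "0 < b" "b \<le> 1"
  shows "\<exists>C. \<forall>s\<ge>0. \<bar>weyl_tail D b m s\<bar> \<le> C / (1+s)^K"
proof -
  obtain C where C: "\<And>s u. s \<ge> 0 \<Longrightarrow> u > 0 \<Longrightarrow>
      \<bar>u powr (b-1) * D m (s+u)\<bar> \<le> C / (1+s)^K * (u powr (b-1) / (1+u)^2)"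
    using weyl_tail_integrand_bound[OF assms(1)] by blast
  have "\<bar>weyl_tail D b m s\<bar> \<le> C * Ioi_kernel_mass b / (1+s)^K" if "s \<ge> 0" for s
    using set_integral_Ioi_kernel_bound[OF assms(2,3)
            weyl_tail_integrand_continuous[OF assms(1) that] C[OF that]]
    unfolding weyl_tail_def by simp
  then show ?thesis by blast
qed

lemma schwartz_tower_taylor_bound:
  assumes "schwartz_tower D f" "0 < x - \<bar>h\<bar>" "0 \<le> u" "u \<le> x - \<bar>h\<bar>"
    and C: "\<And>y. y \<ge> 0 \<Longrightarrow> \<bar>D (Suc (Suc m)) y\<bar> \<le> C / (1+y)^2"
  shows "\<bar>D m (x+h) - D m x - h * D (Suc m) x\<bar> \<le> h^2/2 * (C/(1+u)^2)"
proof (cases "h = 0")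
  case False
  have "\<exists>t. (if x + h < x then x + h < t \<and> t < x else x < t \<and> t < x + h) \<and>
    D m (x+h) = (\<Sum>k<2. (D (m+k) x / fact k) * (x + h - x)^k) + (D (m+2) t / fact 2) * (x + h - x)^2"
  proof (rule Taylor[where diff = "\<lambda>k. D (m+k)" and a = "x - \<bar>h\<bar>" and b = "x + \<bar>h\<bar>"])
    show "\<forall>k t. k < 2 \<and> x - \<bar>h\<bar> \<le> t \<and> t \<le> x + \<bar>h\<bar> \<longrightarrow> DERIV (D (m+k)) t :> D (m + Suc k) t"
    proof (intro allI impI)
      fix k :: nat and t :: real assume "k < 2 \<and> x - \<bar>h\<bar> \<le> t \<and> t \<le> x + \<bar>h\<bar>"
      then have "t > 0" using assms(2) by linarith
      then show "DERIV (D (m+k)) t :> D (m + Suc k) t"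
        using schwartz_tower_deriv_at[OF assms(1), of t "m+k"] by simp
    qed
  qed (use False in auto)
  then obtain t where t: "if x + h < x then x + h < t \<and> t < x else x < t \<and> t < x + h"
    and "D m (x+h) = (\<Sum>k<2. (D (m+k) x / fact k) * (x + h - x)^k) + (D (m+2) t / fact 2) * (x + h - x)^2"
    by blast
  then have remainder: "D m (x+h) - D m x - h * D (Suc m) x = D (Suc (Suc m)) t * h^2 / 2"
    by (simp add: numeral_2_eq_2 algebra_simps)
  have tu: "u \<le> t" using t assms(2,4) by (auto split: if_splits)
  have "C \<ge> 0" using C[of 0] abs_ge_zero[of "D (Suc (Suc m)) 0"] by simp
  then have "C / (1+t)^2 \<le> C / (1+u)^2"
    using tu assms(3) by (intro divide_left_mono power_mono mult_pos_pos) auto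
  then have "\<bar>D (Suc (Suc m)) t\<bar> \<le> C / (1+u)^2"
    using C[of t] tu assms(3) by simp
  then have "\<bar>D (Suc (Suc m)) t\<bar> * h^2 / 2 \<le> C / (1+u)^2 * h^2 / 2"
    by (intro divide_right_mono mult_right_mono) auto
  then show ?thesis unfolding remainder by (simp add: abs_mult mult_ac)
qed simp

lemma DERIV_of_difference_quotient_bound:
  fixes F :: "real \<Rightarrow> real"
  assumes "\<delta> > 0" "K \<ge> 0"
    and "\<And>h. h \<noteq> 0 \<Longrightarrow> \<bar>h\<bar> < \<delta> \<Longrightarrow> \<bar>(F (s+h) - F s)/h - L\<bar> \<le> \<bar>h\<bar> * K"
  shows "(F has_real_derivative L) (at s)"
  unfolding DERIV_def
proof (rule LIM_I)
  fix r :: real assume r: "r > 0"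
  define d where "d = min \<delta> (r / (K+1))"
  have "\<bar>(F (s+h) - F s)/h - L\<bar> < r" if h: "h \<noteq> 0" "\<bar>h\<bar> < d" for h
  proof -
    have "\<bar>(F (s+h) - F s)/h - L\<bar> \<le> \<bar>h\<bar> * K"
      using assms(3) h by (auto simp: d_def)
    also have "\<dots> \<le> \<bar>h\<bar> * (K+1)" by (intro mult_left_mono) auto
    also have "\<dots> < r / (K+1) * (K+1)"
      using h assms(2) by (intro mult_strict_right_mono) (auto simp: d_def)
    finally show ?thesis using assms(2) by simp
  qed
  moreover have "d > 0" using assms r by (auto simp: d_def)
  ultimately show "\<exists>d>0. \<forall>h. h \<noteq> 0 \<and> norm (h - 0) < d \<longrightarrow> norm ((F (s + h) - F s) / h - L) < r"
    by auto
qed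

lemma weyl_tail_second_difference_bound:
  assumes "schwartz_tower D f" "0 < b" "b \<le> 1"
  shows "\<exists>K\<ge>0. \<forall>s h. 0 < s - \<bar>h\<bar> \<longrightarrow>
           \<bar>weyl_tail D b m (s+h) - weyl_tail D b m s - h * weyl_tail D b (Suc m) s\<bar> \<le> h^2 * K"
proof -
  obtain C where C: "\<And>y. y \<ge> 0 \<Longrightarrow> \<bar>D (Suc (Suc m)) y\<bar> \<le> C / (1+y)^2"
    using schwartz_tower_decay[OF assms(1), of "Suc (Suc m)" 2] by blast
  have C0: "C \<ge> 0" using C[of 0] abs_ge_zero[of "D (Suc (Suc m)) 0"] by simp
  have "\<bar>weyl_tail D b m (s+h) - weyl_tail D b m s - h * weyl_tail D b (Suc m) s\<bar>
          \<le> h^2 * (C/2 * Ioi_kernel_mass b)" if sh: "0 < s - \<bar>h\<bar>" for s h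
  proof -
    define g where "g u = u powr (b-1) * (D m ((s+h)+u) - D m (s+u) - h * D (Suc m) (s+u))" for u
    have g_split: "g = (\<lambda>u. u powr (b-1) * D m ((s+h)+u) - u powr (b-1) * D m (s+u)
                             - h * (u powr (b-1) * D (Suc m) (s+u)))"
      unfolding g_def by (auto simp: fun_eq_iff algebra_simps)
    have s: "s \<ge> 0" "s + h \<ge> 0" using sh by linarith+
    note int = weyl_tail_integrable[OF assms(1) s(2) assms(2,3), of m]
               weyl_tail_integrable[OF assms(1) s(1) assms(2,3), of m]
               set_integrable_mult_right[OF weyl_tail_integrable[OF assms(1) s(1) assms(2,3)], of h "Suc m"]
    have eq: "(LBINT u:{0<..}. g u) = weyl_tail D b m (s+h) - weyl_tail D b m s - h * weyl_tail D b (Suc m) s"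
      unfolding g_split weyl_tail_def
      using set_integral_diff(2)[OF set_integral_diff(1)[OF int(1,2)] int(3)]
            set_integral_diff(2)[OF int(1,2)] by simp
    have cont: "continuous_on {0<..} g"
      unfolding g_split
      by (intro continuous_on_diff continuous_on_mult_left
            weyl_tail_integrand_continuous[OF assms(1)] s)
    have bound: "\<bar>g u\<bar> \<le> (h^2/2 * C) * (u powr (b-1) / (1+u)^2)" if u: "u > 0" for u
    proof -
      have "\<bar>D m ((s+u)+h) - D m (s+u) - h * D (Suc m) (s+u)\<bar> \<le> h^2/2 * (C/(1+u)^2)"
        using sh u by (intro schwartz_tower_taylor_bound[OF assms(1) _ _ _ C]) auto
      then have "u powr (b-1) * \<bar>D m ((s+h)+u) - D m (s+u) - h * D (Suc m) (s+u)\<bar>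
                   \<le> u powr (b-1) * (h^2/2 * (C/(1+u)^2))"
        by (intro mult_left_mono) (auto simp: add_ac)
      also have "\<dots> = (h^2/2 * C) * (u powr (b-1) / (1+u)^2)" by simp
      finally show ?thesis unfolding g_def by (simp add: abs_mult)
    qed
    show ?thesis
      using set_integral_Ioi_kernel_bound[OF assms(2,3) cont bound] unfolding eq
      by (simp add: algebra_simps)
  qed
  moreover have "C/2 * Ioi_kernel_mass b \<ge> 0" using C0 Ioi_kernel_mass_nonneg by simp
  ultimately show ?thesis by blast
qed

lemma weyl_tail_has_derivative:
  assumes "schwartz_tower D f" "0 < b" "b \<le> 1" "s > 0"
  shows "(weyl_tail D b m has_real_derivative weyl_tail D b (Suc m) s) (at s)"
proof -
  obtain K where K: "K \<ge> 0" and bound: "\<And>h. 0 < s - \<bar>h\<bar> \<Longrightarrow>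
      \<bar>weyl_tail D b m (s+h) - weyl_tail D b m s - h * weyl_tail D b (Suc m) s\<bar> \<le> h^2 * K"
    using weyl_tail_second_difference_bound[OF assms(1-3), of m] by blast
  show ?thesis
  proof (rule DERIV_of_difference_quotient_bound[OF assms(4) K])
    fix h :: real assume h: "h \<noteq> 0" "\<bar>h\<bar> < s"
    have "\<bar>(weyl_tail D b m (s+h) - weyl_tail D b m s)/h - weyl_tail D b (Suc m) s\<bar>
        = \<bar>weyl_tail D b m (s+h) - weyl_tail D b m s - h * weyl_tail D b (Suc m) s\<bar> / \<bar>h\<bar>"
      using h by (simp add: field_simps abs_div)
    also have "\<dots> \<le> h^2 * K / \<bar>h\<bar>"
      using bound[of h] h by (intro divide_right_mono) auto
    also have "\<dots> = \<bar>h\<bar> * K"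
      using h by (simp add: power2_eq_square abs_mult_self_eq field_simps)
    finally show "\<bar>(weyl_tail D b m (s+h) - weyl_tail D b m s)/h - weyl_tail D b (Suc m) s\<bar> \<le> \<bar>h\<bar> * K" .
  qed
qed

lemma weyl_tail_diff:
  assumes "schwartz_tower D f" "schwartz_tower E g" "0 < b" "b \<le> 1" "s \<ge> 0"
  shows "weyl_tail (\<lambda>n s. D n s - E n s) b m s = weyl_tail D b m s - weyl_tail E b m s"
proof -
  have "weyl_tail (\<lambda>n s. D n s - E n s) b m s
      = (LBINT u:{0<..}. u powr (b-1) * D m (s+u) - u powr (b-1) * E m (s+u))"
    unfolding weyl_tail_def by (simp add: algebra_simps)
  also have "\<dots> = weyl_tail D b m s - weyl_tail E b m s"
    unfolding weyl_tail_def
    by (rule set_integral_diff(2)[OF weyl_tail_integrable[OF assms(1,5,3,4)]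
                                     weyl_tail_integrable[OF assms(2,5,3,4)]])
  finally show ?thesis .
qed

lemma weyl_tail_dilate:
  assumes "c > 0" "b > 0"
  shows "weyl_tail (\<lambda>n s. a * c^n * D n (c * s)) b m s
           = a * c powr (real m - b) * weyl_tail D b m (c * s)"
proof -
  define \<phi> where "\<phi> v = v powr (b-1) * D m (c * s + v)" for v
  have "u powr (b-1) * (a * c^m * D m (c * (s+u))) = (a * c^m * c powr (1-b)) * \<phi> (c * u)"
    if "u > 0" for u
  proof -
    have "(c * u) powr (b-1) = c powr (b-1) * u powr (b-1)" using assms that by (simp add: powr_mult)
    moreover have "c powr (1-b) * c powr (b-1) = 1" using assms by (simp flip: powr_add)
    ultimately show ?thesis unfolding \<phi>_def by (simp add: algebra_simps)
  qed
  then have "weyl_tail (\<lambda>n s. a * c^n * D n (c * s)) b m s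
      = (LBINT u:{0<..}. (a * c^m * c powr (1-b)) * \<phi> (c * u))"
    unfolding weyl_tail_def by (intro set_lebesgue_integral_cong) auto
  also have "\<dots> = (a * c^m * c powr (1-b)) * (weyl_tail D b m (c * s) / c)"
    using set_integral_Ioi_dilate[OF assms(1), of \<phi>] unfolding \<phi>_def weyl_tail_def by simp
  also have "\<dots> = a * (c powr real m * c powr (1-b) / c powr 1) * weyl_tail D b m (c * s)"
    using assms by (simp add: powr_realpow)
  also have "c powr real m * c powr (1-b) / c powr 1 = c powr (real m - b)"
    by (simp only: powr_add[symmetric] powr_diff[symmetric]) simp
  finally show ?thesis .
qed

lemma weyl_int_eq_weyl_tail:
  assumes "schwartz_tower D f" "s \<ge> 0"
  shows "weyl_int b f s = weyl_tail D b 0 s / Gamma b"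
proof -
  have "(LBINT t:{s<..}. (t - s) powr (b - 1) * f t)
      = (LBINT u:{0<..}. (s + u - s) powr (b - 1) * f (s + u))"
    by (rule set_integral_Ioi_shift)
  also have "\<dots> = (LBINT u:{0<..}. u powr (b - 1) * D 0 (s + u))"
    using assms unfolding schwartz_tower_def by (intro set_lebesgue_integral_cong) auto
  finally show ?thesis unfolding weyl_int_def weyl_tail_def by simp
qed

lemma higher_deriv_weyl_int:
  assumes "schwartz_tower D f" "0 < b" "b \<le> 1"
  shows "\<forall>s>0. (deriv ^^ k) (weyl_int b f) s = weyl_tail D b k s / Gamma b"
proof (induction k)
  case 0
  then show ?case using weyl_int_eq_weyl_tail[OF assms(1)] by simp
next
  case (Suc k)
  show ?case
  proof (intro allI impI)
    fix s :: real assume s: "s > 0"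
    have "((\<lambda>x. weyl_tail D b k x / Gamma b) has_real_derivative weyl_tail D b (Suc k) s / Gamma b) (at s)"
      by (intro DERIV_cdivide weyl_tail_has_derivative[OF assms s])
    then have "((deriv ^^ k) (weyl_int b f) has_real_derivative weyl_tail D b (Suc k) s / Gamma b) (at s)"
      by (rule has_field_derivative_transform_within_open[where S = "{0<..}"]) (use s Suc in auto)
    then show "(deriv ^^ Suc k) (weyl_int b f) s = weyl_tail D b (Suc k) s / Gamma b"
      by (simp add: DERIV_imp_deriv)
  qed
qed

definition weyl_order :: "real \<Rightarrow> nat" where
  "weyl_order \<alpha> = nat \<lfloor>\<alpha>\<rfloor> + 1"

lemma weyl_order_bounds:
  assumes "\<alpha> > 0"
  shows "0 < real (weyl_order \<alpha>) - \<alpha>" "real (weyl_order \<alpha>) - \<alpha> \<le> 1"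
proof -
  have "real (weyl_order \<alpha>) = of_int \<lfloor>\<alpha>\<rfloor> + 1" using assms by (simp add: weyl_order_def)
  then show "0 < real (weyl_order \<alpha>) - \<alpha>" "real (weyl_order \<alpha>) - \<alpha> \<le> 1"
    using of_int_floor_le[of \<alpha>] real_of_int_floor_add_one_gt[of \<alpha>] by linarith+
qed

definition weyl_der_tower :: "(nat \<Rightarrow> real \<Rightarrow> real) \<Rightarrow> real \<Rightarrow> real \<Rightarrow> real" where
  "weyl_der_tower D \<alpha> s = (if \<alpha> = 0 then D 0 s
      else (-1)^(weyl_order \<alpha>) * (weyl_tail D (real (weyl_order \<alpha>) - \<alpha>) (weyl_order \<alpha>) s
                                    / Gamma (real (weyl_order \<alpha>) - \<alpha>)))"

lemma weyl_der_eq_tower: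
  assumes "schwartz_tower D f" "\<alpha> \<ge> 0" "s > 0"
  shows "weyl_der \<alpha> f s = weyl_der_tower D \<alpha> s"
proof (cases "\<alpha> = 0")
  case True
  then show ?thesis using assms unfolding weyl_der_def weyl_der_tower_def schwartz_tower_def by auto
next
  case False
  then have "\<alpha> > 0" using assms by auto
  then have "(deriv ^^ weyl_order \<alpha>) (weyl_int (real (weyl_order \<alpha>) - \<alpha>) f) s
      = weyl_tail D (real (weyl_order \<alpha>) - \<alpha>) (weyl_order \<alpha>) s / Gamma (real (weyl_order \<alpha>) - \<alpha>)"
    using higher_deriv_weyl_int[OF assms(1) weyl_order_bounds] assms(3) by blast
  then show ?thesis using False unfolding weyl_der_def weyl_der_tower_def Let_def weyl_order_def by simp
qed

lemma weyl_der_tower_continuous_on: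
  assumes "schwartz_tower D f" "\<alpha> \<ge> 0"
  shows "continuous_on {0<..} (weyl_der_tower D \<alpha>)"
proof (cases "\<alpha> = 0")
  case True
  have "continuous_on {0<..} (D 0)"
    by (rule continuous_on_subset[OF schwartz_tower_continuous_on[OF assms(1)]]) auto
  then show ?thesis using True unfolding weyl_der_tower_def by simp
next
  case False
  then have "\<alpha> > 0" using assms by auto
  note bounds = weyl_order_bounds[OF this]
  have "continuous_on {0<..} (weyl_tail D (real (weyl_order \<alpha>) - \<alpha>) (weyl_order \<alpha>))"
    by (rule DERIV_continuous_on[OF has_field_derivative_at_within[OF
          weyl_tail_has_derivative[OF assms(1) bounds]]]) auto
  moreover have "Gamma (real (weyl_order \<alpha>) - \<alpha>) > 0" using bounds by (intro Gamma_real_pos) auto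
  ultimately have "continuous_on {0<..} (\<lambda>s. (-1)^(weyl_order \<alpha>) *
      (weyl_tail D (real (weyl_order \<alpha>) - \<alpha>) (weyl_order \<alpha>) s / Gamma (real (weyl_order \<alpha>) - \<alpha>)))"
    by (intro continuous_intros) auto
  then show ?thesis using False unfolding weyl_der_tower_def by simp
qed

lemma weyl_der_tower_decay:
  assumes "schwartz_tower D f" "\<alpha> \<ge> 0"
  shows "\<exists>C. \<forall>s>0. \<bar>weyl_der_tower D \<alpha> s\<bar> \<le> C / (1+s)^K"
proof (cases "\<alpha> = 0")
  case True
  obtain C where "\<forall>s\<ge>0. \<bar>D 0 s\<bar> \<le> C / (1+s)^K" using schwartz_tower_decay[OF assms(1)] by blast
  then show ?thesis using True unfolding weyl_der_tower_def by (intro exI[of _ C]) auto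
next
  case False
  then have "\<alpha> > 0" using assms by auto
  note bounds = weyl_order_bounds[OF this]
  define b where "b = real (weyl_order \<alpha>) - \<alpha>"
  obtain C where C: "\<And>s. s \<ge> 0 \<Longrightarrow> \<bar>weyl_tail D b (weyl_order \<alpha>) s\<bar> \<le> C / (1+s)^K"
    using weyl_tail_decay[OF assms(1) bounds, of "weyl_order \<alpha>" K] unfolding b_def by blast
  have Gamma_pos: "Gamma b > 0" using bounds unfolding b_def by (intro Gamma_real_pos) auto
  have "\<bar>weyl_der_tower D \<alpha> s\<bar> \<le> C / Gamma b / (1+s)^K" if "s > 0" for s
  proof -
    have "\<bar>weyl_der_tower D \<alpha> s\<bar> = \<bar>weyl_tail D b (weyl_order \<alpha>) s\<bar> / Gamma b"
      using False Gamma_pos unfolding weyl_der_tower_def b_def by (simp add: abs_mult abs_div)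
    also have "\<dots> \<le> C / (1+s)^K / Gamma b"
      using C[of s] that Gamma_pos by (intro divide_right_mono) auto
    finally show ?thesis by (simp add: mult.commute)
  qed
  then show ?thesis by blast
qed

lemma weyl_der_tower_diff:
  assumes "schwartz_tower D f" "schwartz_tower E g" "\<alpha> \<ge> 0" "s > 0"
  shows "weyl_der_tower (\<lambda>n s. D n s - E n s) \<alpha> s = weyl_der_tower D \<alpha> s - weyl_der_tower E \<alpha> s"
proof (cases "\<alpha> = 0")
  case False
  then have "\<alpha> > 0" using assms by auto
  then show ?thesis
    using weyl_tail_diff[OF assms(1,2) weyl_order_bounds, of \<alpha> s "weyl_order \<alpha>"] assms(4) False
    unfolding weyl_der_tower_def by (simp add: diff_divide_distrib right_diff_distrib)
qed (simp add: weyl_der_tower_def)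

lemma weyl_der_tower_dilate:
  assumes "c > 0" "\<alpha> \<ge> 0"
  shows "weyl_der_tower (\<lambda>n s. a * c^n * D n (c * s)) \<alpha> s = a * c powr \<alpha> * weyl_der_tower D \<alpha> (c * s)"
proof (cases "\<alpha> = 0")
  case False
  then have "\<alpha> > 0" using assms by auto
  then show ?thesis
    using False weyl_tail_dilate[OF assms(1) weyl_order_bounds(1), of \<alpha> a D "weyl_order \<alpha>" s]
    unfolding weyl_der_tower_def by (simp add: algebra_simps)
qed (use assms in \<open>simp add: weyl_der_tower_def\<close>)

lemma weyl_der_diff:
  assumes "f \<in> schwartz_plus" "g \<in> schwartz_plus" "\<alpha> \<ge> 0" "s > 0"
  shows "weyl_der \<alpha> (\<lambda>s. f s - g s) s = weyl_der \<alpha> f s - weyl_der \<alpha> g s"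
proof -
  obtain D E where D: "schwartz_tower D f" and E: "schwartz_tower E g"
    using assms(1,2) unfolding schwartz_plus_iff_tower by blast
  show ?thesis
    using weyl_der_eq_tower[OF schwartz_tower_diff[OF D E] assms(3,4)]
          weyl_der_eq_tower[OF D assms(3,4)] weyl_der_eq_tower[OF E assms(3,4)]
          weyl_der_tower_diff[OF D E assms(3,4)]
    by simp
qed

lemma weyl_der_dilate:
  assumes "f \<in> schwartz_plus" "c > 0" "\<alpha> \<ge> 0" "s > 0"
  shows "weyl_der \<alpha> (\<lambda>s. a * f (c * s)) s = a * c powr \<alpha> * weyl_der \<alpha> f (c * s)"
proof -
  obtain D where D: "schwartz_tower D f" using assms(1) unfolding schwartz_plus_iff_tower by blast
  have "c * s > 0" using assms by simp
  then show ?thesis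
    using weyl_der_eq_tower[OF schwartz_tower_dilate[OF D assms(2)] assms(3,4)]
          weyl_der_eq_tower[OF D assms(3)] weyl_der_tower_dilate[OF assms(2,3)]
    by simp
qed

section \<open>L^p on (0,\<infinity>) and H\<ouml>lder's inequality\<close>

definition Lp_Ioi :: "real \<Rightarrow> (real \<Rightarrow> real) \<Rightarrow> bool" where
  "Lp_Ioi q F \<longleftrightarrow> set_borel_measurable lborel {0<..} F \<and>
                   set_integrable lborel {0<..} (\<lambda>s. \<bar>F s\<bar> powr q)"

definition Lp_norm_Ioi :: "real \<Rightarrow> (real \<Rightarrow> real) \<Rightarrow> real" where
  "Lp_norm_Ioi q F = (LBINT s:{0<..}. \<bar>F s\<bar> powr q) powr (1/q)"

definition Lp_Cauchy_Ioi :: "real \<Rightarrow> (nat \<Rightarrow> real \<Rightarrow> real) \<Rightarrow> bool" where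
  "Lp_Cauchy_Ioi q F \<longleftrightarrow> (\<forall>e>0. \<exists>N. \<forall>m\<ge>N. \<forall>n\<ge>N. Lp_norm_Ioi q (\<lambda>s. F m s - F n s) < e)"

lemma Lp_norm_Ioi_nonneg: "Lp_norm_Ioi q F \<ge> 0"
  unfolding Lp_norm_Ioi_def by simp

lemma Lp_Ioi_cong: "(\<And>s. s > 0 \<Longrightarrow> F s = G s) \<Longrightarrow> Lp_Ioi q F \<longleftrightarrow> Lp_Ioi q G"
  unfolding Lp_Ioi_def set_borel_measurable_def
  by (intro arg_cong2[where f = "(\<and>)"] arg_cong[where f = "\<lambda>h. h \<in> _"] set_integrable_cong)
     (auto simp: fun_eq_iff indicator_def)

lemma Lp_norm_Ioi_cong:
  assumes "\<And>s. s > 0 \<Longrightarrow> F s = G s"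
  shows "Lp_norm_Ioi q F = Lp_norm_Ioi q G"
proof -
  have "(LBINT s:{0<..}. \<bar>F s\<bar> powr q) = (LBINT s:{0<..}. \<bar>G s\<bar> powr q)"
    by (rule set_lebesgue_integral_cong) (use assms in auto)
  then show ?thesis unfolding Lp_norm_Ioi_def by simp
qed

lemma Lp_norm_Ioi_scale:
  assumes "q > 0"
  shows "Lp_norm_Ioi q (\<lambda>s. a * F s) = \<bar>a\<bar> * Lp_norm_Ioi q F"
proof -
  have "(LBINT s:{0<..}. \<bar>a * F s\<bar> powr q) = \<bar>a\<bar> powr q * (LBINT s:{0<..}. \<bar>F s\<bar> powr q)"
    by (simp add: abs_mult powr_mult)
  moreover have "(\<bar>a\<bar> powr q) powr (1/q) = \<bar>a\<bar>" using assms by (simp add: powr_powr)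
  ultimately show ?thesis unfolding Lp_norm_Ioi_def by (simp add: powr_mult)
qed

lemma Lp_norm_Ioi_dilate:
  assumes "c > 0"
  shows "Lp_norm_Ioi q (\<lambda>s. F (c * s)) = c powr (-1/q) * Lp_norm_Ioi q F"
  using set_integral_Ioi_dilate[OF assms, of "\<lambda>s. \<bar>F s\<bar> powr q"]
  unfolding Lp_norm_Ioi_def by (simp add: powr_divide powr_minus_divide)

lemma set_borel_measurable_mult:
  fixes F G :: "real \<Rightarrow> real"
  assumes "set_borel_measurable lborel A F" "set_borel_measurable lborel A G"
  shows "set_borel_measurable lborel A (\<lambda>s. F s * G s)"
proof -
  have "(\<lambda>x. (indicator A x *\<^sub>R F x) * (indicator A x *\<^sub>R G x)) \<in> borel_measurable lborel"
    using assms unfolding set_borel_measurable_def by simp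
  moreover have "(\<lambda>x. (indicator A x *\<^sub>R F x) * (indicator A x *\<^sub>R G x))
               = (\<lambda>x. indicator A x *\<^sub>R (F x * G x))"
    by (auto simp: fun_eq_iff indicator_def)
  ultimately show ?thesis unfolding set_borel_measurable_def by simp
qed

lemma Lp_Ioi_mult_integrable:
  assumes "p > 1" "q > 1" "1/p + 1/q = 1" "Lp_Ioi p F" "Lp_Ioi q G"
  shows "set_integrable lborel {0<..} (\<lambda>s. F s * G s)"
proof (rule set_integrable_bound)
  show "set_integrable lborel {0<..} (\<lambda>s. \<bar>F s\<bar> powr p / p + \<bar>G s\<bar> powr q / q)"
    using assms unfolding Lp_Ioi_def by (intro set_integral_add(1) set_integrable_divide) auto
  show "set_borel_measurable lborel {0<..} (\<lambda>s. F s * G s)"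
    using assms unfolding Lp_Ioi_def by (intro set_borel_measurable_mult) auto
  show "AE x in lborel. x \<in> {0<..} \<longrightarrow> norm (F x * G x) \<le> norm (\<bar>F x\<bar> powr p / p + \<bar>G x\<bar> powr q / q)"
  proof (intro AE_I2 impI)
    fix x :: real
    have "\<bar>F x\<bar> * \<bar>G x\<bar> \<le> \<bar>F x\<bar> powr p / p + \<bar>G x\<bar> powr q / q"
      using assms by (intro Youngs_inequality) auto
    then show "norm (F x * G x) \<le> norm (\<bar>F x\<bar> powr p / p + \<bar>G x\<bar> powr q / q)"
      by (simp add: abs_mult)
  qed
qed

lemma set_integral_mult_eq_0_of_Lp_norm:
  assumes "Lp_Ioi p F" "(LBINT s:{0<..}. \<bar>F s\<bar> powr p) = 0"
  shows "(LBINT s:{0<..}. F s * G s) = 0"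
proof -
  have "AE s in lborel. indicator {0<..} s *\<^sub>R \<bar>F s\<bar> powr p = (0::real)"
    using assms unfolding Lp_Ioi_def set_integrable_def set_lebesgue_integral_def
    by (subst (asm) integral_nonneg_eq_0_iff_AE) (auto simp: indicator_def)
  then have "AE s in lborel. indicator {0<..} s *\<^sub>R (F s * G s) = 0"
    by eventually_elim (auto simp: indicator_def split: if_splits)
  then show ?thesis unfolding set_lebesgue_integral_def by (rule integral_eq_zero_AE)
qed

lemma Youngs_inequality_scaled:
  fixes x y :: real
  assumes "p > 1" "q > 1" "1/p + 1/q = 1" "a > 0" "b > 0"
  shows "\<bar>x * y\<bar> \<le> (a*b/p) * (\<bar>x\<bar>/a) powr p + (a*b/q) * (\<bar>y\<bar>/b) powr q"
proof -
  have "(\<bar>x\<bar>/a) * (\<bar>y\<bar>/b) \<le> (\<bar>x\<bar>/a) powr p / p + (\<bar>y\<bar>/b) powr q / q"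
    using assms by (intro Youngs_inequality) auto
  then have "(\<bar>x\<bar>/a) * (\<bar>y\<bar>/b) * (a*b) \<le> ((\<bar>x\<bar>/a) powr p / p + (\<bar>y\<bar>/b) powr q / q) * (a*b)"
    using assms by (intro mult_right_mono) auto
  moreover have "(\<bar>x\<bar>/a) * (\<bar>y\<bar>/b) * (a*b) = \<bar>x * y\<bar>" using assms by (simp add: abs_mult)
  moreover have "((\<bar>x\<bar>/a) powr p / p + (\<bar>y\<bar>/b) powr q / q) * (a*b)
               = (a*b/p) * (\<bar>x\<bar>/a) powr p + (a*b/q) * (\<bar>y\<bar>/b) powr q"
    by (simp add: field_simps)
  ultimately show ?thesis by simp
qed

lemma Holder_inequality_Ioi:
  assumes pq: "p > 1" "q > 1" "1/p + 1/q = 1" and F: "Lp_Ioi p F" and G: "Lp_Ioi q G"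
  shows "\<bar>LBINT s:{0<..}. F s * G s\<bar> \<le> Lp_norm_Ioi p F * Lp_norm_Ioi q G"
proof -
  define A where "A = (LBINT s:{0<..}. \<bar>F s\<bar> powr p)"
  define B where "B = (LBINT s:{0<..}. \<bar>G s\<bar> powr q)"
  have nonneg: "A \<ge> 0" "B \<ge> 0" unfolding A_def B_def set_lebesgue_integral_def
    by (intro Bochner_Integration.integral_nonneg; simp add: indicator_def)+
  consider "A = 0" | "B = 0" | "A > 0" "B > 0" using nonneg by linarith
  then show ?thesis
  proof cases
    case 1
    then show ?thesis using set_integral_mult_eq_0_of_Lp_norm[OF F] Lp_norm_Ioi_nonneg
      unfolding A_def by (simp add: zero_le_mult_iff)
  next
    case 2
    then have "(LBINT s:{0<..}. G s * F s) = 0"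
      using set_integral_mult_eq_0_of_Lp_norm[OF G] unfolding B_def by simp
    then show ?thesis using Lp_norm_Ioi_nonneg by (simp add: mult.commute zero_le_mult_iff)
  next
    case 3
    define a where "a = A powr (1/p)"
    define b where "b = B powr (1/q)"
    have ab: "a > 0" "b > 0" using 3 unfolding a_def b_def by auto
    have "a powr p = A" "b powr q = B" using 3 pq unfolding a_def b_def by (simp_all add: powr_powr)
    then have Young: "\<bar>F s * G s\<bar> \<le> (a*b/(p*A)) * \<bar>F s\<bar> powr p + (a*b/(q*B)) * \<bar>G s\<bar> powr q" for s
      using Youngs_inequality_scaled[OF pq ab, of "F s" "G s"] ab
      by (simp add: powr_divide)
    have FG: "set_integrable lborel {0<..} (\<lambda>s. F s * G s)" by (rule Lp_Ioi_mult_integrable[OF pq F G])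
    have P: "set_integrable lborel {0<..} (\<lambda>s. \<bar>F s\<bar> powr p)"
     and Q: "set_integrable lborel {0<..} (\<lambda>s. \<bar>G s\<bar> powr q)"
      using F G unfolding Lp_Ioi_def by simp_all
    have "\<bar>LBINT s:{0<..}. F s * G s\<bar> \<le> (LBINT s:{0<..}. \<bar>F s * G s\<bar>)"
      using set_integral_norm_bound[OF FG] by simp
    also have "\<dots> \<le> (LBINT s:{0<..}. (a*b/(p*A)) * \<bar>F s\<bar> powr p + (a*b/(q*B)) * \<bar>G s\<bar> powr q)"
      by (rule set_integral_mono[OF set_integrable_abs[OF FG]]) (use P Q Young in auto)
    also have "\<dots> = (a*b/(p*A)) * A + (a*b/(q*B)) * B"
      unfolding A_def B_def by (subst set_integral_add(2)) (use P Q in auto)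
    also have "\<dots> = a * b * (1/p + 1/q)" using 3 by (simp add: field_simps)
    also have "\<dots> = Lp_norm_Ioi p F * Lp_norm_Ioi q G"
      using pq unfolding a_def b_def A_def B_def Lp_norm_Ioi_def by simp
    finally show ?thesis .
  qed
qed

lemma pairing_difference_bound:
  assumes pq: "p > 1" "q > 1" "1/p + 1/q = 1"
    and F: "\<And>n. Lp_Ioi p (F n)" and G: "\<And>n. Lp_Ioi q (G n)"
    and dF: "\<And>m n. Lp_Ioi p (\<lambda>s. F m s - F n s)" and dG: "\<And>m n. Lp_Ioi q (\<lambda>s. G m s - G n s)"
    and close: "Lp_norm_Ioi p (\<lambda>s. F m s - F k s) \<le> 1" "Lp_norm_Ioi q (\<lambda>s. G n s - G k s) \<le> 1"
  shows "\<bar>(LBINT s:{0<..}. F n s * G n s) - (LBINT s:{0<..}. F m s * G m s)\<bar>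
    \<le> Lp_norm_Ioi p (\<lambda>s. F n s - F m s) * (Lp_norm_Ioi q (G k) + 1)
     + (Lp_norm_Ioi p (F k) + 1) * Lp_norm_Ioi q (\<lambda>s. G n s - G m s)"
    (is "_ \<le> ?nF * (?nGk + 1) + (?nFk + 1) * ?nG")
proof -
  note int = Lp_Ioi_mult_integrable[OF pq] and Holder = Holder_inequality_Ioi[OF pq]
  define T1 where "T1 s = (F n s - F m s) * (G n s - G k s)" for s
  define T2 where "T2 s = (F n s - F m s) * G k s" for s
  define T3 where "T3 s = (F m s - F k s) * (G n s - G m s)" for s
  define T4 where "T4 s = F k s * (G n s - G m s)" for s
  \<comment> \<open>F_n G_n - F_m G_m telescoped through the fixed pair F_k, G_k\<close>
  have "(LBINT s:{0<..}. F n s * G n s) - (LBINT s:{0<..}. F m s * G m s)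
      = (LBINT s:{0<..}. F n s * G n s - F m s * G m s)"
    by (rule set_integral_diff(2)[symmetric]) (intro int F G)+
  also have "\<dots> = (LBINT s:{0<..}. T1 s + T2 s + T3 s + T4 s)"
    unfolding T1_def T2_def T3_def T4_def by (simp add: algebra_simps)
  also have "\<dots> = (LBINT s:{0<..}. T1 s) + (LBINT s:{0<..}. T2 s)
                 + (LBINT s:{0<..}. T3 s) + (LBINT s:{0<..}. T4 s)"
  proof -
    have "set_integrable lborel {0<..} T1" "set_integrable lborel {0<..} T2"
         "set_integrable lborel {0<..} T3" "set_integrable lborel {0<..} T4"
      unfolding T1_def[abs_def] T2_def[abs_def] T3_def[abs_def] T4_def[abs_def]
      by (intro int F G dF dG)+
    then show ?thesis by (simp add: set_integral_add)
  qed
  finally have split: "(LBINT s:{0<..}. F n s * G n s) - (LBINT s:{0<..}. F m s * G m s) = \<dots>" .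
  have "\<bar>LBINT s:{0<..}. T1 s\<bar> \<le> ?nF * Lp_norm_Ioi q (\<lambda>s. G n s - G k s)"
       "\<bar>LBINT s:{0<..}. T2 s\<bar> \<le> ?nF * ?nGk"
       "\<bar>LBINT s:{0<..}. T3 s\<bar> \<le> Lp_norm_Ioi p (\<lambda>s. F m s - F k s) * ?nG"
       "\<bar>LBINT s:{0<..}. T4 s\<bar> \<le> ?nFk * ?nG"
    unfolding T1_def T2_def T3_def T4_def by (intro Holder F G dF dG)+
  moreover have "?nF * Lp_norm_Ioi q (\<lambda>s. G n s - G k s) \<le> ?nF"
                "Lp_norm_Ioi p (\<lambda>s. F m s - F k s) * ?nG \<le> ?nG"
    using close by (simp_all add: mult_left_le mult_left_le_one_le Lp_norm_Ioi_nonneg)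
  ultimately show ?thesis unfolding split by (simp add: algebra_simps)
qed

lemma convergent_pairing_of_Lp_Cauchy:
  assumes pq: "p > 1" "q > 1" "1/p + 1/q = 1"
    and F: "\<And>n. Lp_Ioi p (F n)" and G: "\<And>n. Lp_Ioi q (G n)"
    and dF: "\<And>m n. Lp_Ioi p (\<lambda>s. F m s - F n s)" and dG: "\<And>m n. Lp_Ioi q (\<lambda>s. G m s - G n s)"
    and CF: "Lp_Cauchy_Ioi p F" and CG: "Lp_Cauchy_Ioi q G"
  shows "convergent (\<lambda>n. LBINT s:{0<..}. F n s * G n s)"
proof -
  obtain k1 k2 where k1: "\<forall>m\<ge>k1. \<forall>n\<ge>k1. Lp_norm_Ioi p (\<lambda>s. F m s - F n s) < 1"
                 and k2: "\<forall>m\<ge>k2. \<forall>n\<ge>k2. Lp_norm_Ioi q (\<lambda>s. G m s - G n s) < 1"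
    using CF CG unfolding Lp_Cauchy_Ioi_def by (meson zero_less_one)
  define k where "k = max k1 k2"
  define KF where "KF = Lp_norm_Ioi p (F k) + 1"
  define KG where "KG = Lp_norm_Ioi q (G k) + 1"
  have K: "KF > 0" "KG > 0" unfolding KF_def KG_def using Lp_norm_Ioi_nonneg by (auto intro: add_nonneg_pos)
  show ?thesis unfolding Cauchy_convergent_iff[symmetric]
  proof (rule CauchyI)
    fix e :: real assume e: "e > 0"
    obtain N1 N2 where N1: "\<forall>m\<ge>N1. \<forall>n\<ge>N1. Lp_norm_Ioi p (\<lambda>s. F m s - F n s) < e / (2*KG)"
                   and N2: "\<forall>m\<ge>N2. \<forall>n\<ge>N2. Lp_norm_Ioi q (\<lambda>s. G m s - G n s) < e / (2*KF)"
      using CF CG e K unfolding Lp_Cauchy_Ioi_def by (meson divide_pos_pos mult_pos_pos zero_less_numeral)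
    have "norm ((LBINT s:{0<..}. F n s * G n s) - (LBINT s:{0<..}. F m s * G m s)) < e"
      if n: "n \<ge> max k (max N1 N2)" and m: "m \<ge> max k (max N1 N2)" for n m
    proof -
      have "Lp_norm_Ioi p (\<lambda>s. F m s - F k s) \<le> 1" "Lp_norm_Ioi q (\<lambda>s. G n s - G k s) \<le> 1"
        using k1 k2 n m by (auto simp: k_def less_imp_le)
      from pairing_difference_bound[where F = F and G = G and k = k, OF pq F G dF dG this]
      have "\<bar>(LBINT s:{0<..}. F n s * G n s) - (LBINT s:{0<..}. F m s * G m s)\<bar>
          \<le> Lp_norm_Ioi p (\<lambda>s. F n s - F m s) * KG + KF * Lp_norm_Ioi q (\<lambda>s. G n s - G m s)"
        unfolding KF_def KG_def .
      also have "\<dots> < e / (2*KG) * KG + KF * (e / (2*KF))"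
        using N1 N2 n m K by (intro add_strict_mono mult_strict_right_mono mult_strict_left_mono) auto
      also have "\<dots> = e" using K by (simp add: field_simps)
      finally show ?thesis by simp
    qed
    then show "\<exists>M. \<forall>m\<ge>M. \<forall>n\<ge>M. norm ((LBINT s:{0<..}. F m s * G m s) - (LBINT s:{0<..}. F n s * G n s)) < e"
      by blast
  qed
qed

section \<open>The spaces T_p^(\<alpha>)(t^\<alpha>) and the dilation semigroups\<close>

definition weighted_weyl_der :: "real \<Rightarrow> (real \<Rightarrow> real) \<Rightarrow> real \<Rightarrow> real" where
  "weighted_weyl_der \<alpha> f s = weyl_der \<alpha> f s * s powr \<alpha>"

lemma weighted_weyl_der_diff:
  assumes "f \<in> schwartz_plus" "g \<in> schwartz_plus" "\<alpha> \<ge> 0" "s > 0"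
  shows "weighted_weyl_der \<alpha> (\<lambda>s. f s - g s) s = weighted_weyl_der \<alpha> f s - weighted_weyl_der \<alpha> g s"
  using weyl_der_diff[OF assms] unfolding weighted_weyl_der_def by (simp add: left_diff_distrib)

lemma weighted_weyl_der_dilate:
  assumes "f \<in> schwartz_plus" "c > 0" "\<alpha> \<ge> 0" "s > 0"
  shows "weighted_weyl_der \<alpha> (\<lambda>s. a * f (c * s)) s = a * weighted_weyl_der \<alpha> f (c * s)"
  using weyl_der_dilate[OF assms] assms(2,4) unfolding weighted_weyl_der_def
  by (simp add: powr_mult)

lemma weighted_weyl_der_continuous_on:
  assumes "f \<in> schwartz_plus" "\<alpha> \<ge> 0"
  shows "continuous_on {0<..} (weighted_weyl_der \<alpha> f)"
proof -
  obtain D where D: "schwartz_tower D f" using assms(1) unfolding schwartz_plus_iff_tower by blast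
  have "continuous_on {0<..} (\<lambda>s. weyl_der_tower D \<alpha> s * s powr \<alpha>)"
    by (intro continuous_on_mult weyl_der_tower_continuous_on[OF D assms(2)])
       (auto intro!: continuous_intros)
  then show ?thesis
    by (rule continuous_on_eq) (simp add: weighted_weyl_der_def weyl_der_eq_tower[OF D assms(2)])
qed

lemma weighted_weyl_der_decay:
  assumes "f \<in> schwartz_plus" "\<alpha> \<ge> 0"
  shows "\<exists>C. \<forall>s>0. \<bar>weighted_weyl_der \<alpha> f s\<bar> \<le> C / (1+s)^2"
proof -
  obtain D where D: "schwartz_tower D f" using assms(1) unfolding schwartz_plus_iff_tower by blast
  obtain N :: nat where N: "\<alpha> \<le> real N" using real_arch_simple by blast
  obtain C where C: "\<And>s. s > 0 \<Longrightarrow> \<bar>weyl_der_tower D \<alpha> s\<bar> \<le> C / (1+s)^(N+2)"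
    using weyl_der_tower_decay[OF D assms(2)] by blast
  have "\<bar>weighted_weyl_der \<alpha> f s\<bar> \<le> C / (1+s)^2" if s: "s > 0" for s
  proof -
    have "s powr \<alpha> \<le> (1+s) powr \<alpha>" using s assms by (intro powr_mono2) auto
    also have "\<dots> \<le> (1+s) powr real N" using s N by (intro powr_mono) auto
    finally have "s powr \<alpha> \<le> (1+s)^N" using s by (simp add: powr_realpow)
    moreover have "0 \<le> C / (1+s)^(N+2)" using C[OF s] abs_ge_zero[of "weyl_der_tower D \<alpha> s"] by linarith
    ultimately have "\<bar>weyl_der_tower D \<alpha> s\<bar> * s powr \<alpha> \<le> C / (1+s)^(N+2) * (1+s)^N"
      using C[OF s] by (intro mult_mono) simp_all
    also have "\<dots> = C / (1+s)^2" using s by (simp add: power_add power2_eq_square)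
    finally show ?thesis
      using weyl_der_eq_tower[OF D assms(2) s] unfolding weighted_weyl_der_def by (simp add: abs_mult)
  qed
  then show ?thesis by blast
qed

lemma Lp_Ioi_weighted_weyl_der:
  assumes "f \<in> schwartz_plus" "\<alpha> \<ge> 0" "q \<ge> 1"
  shows "Lp_Ioi q (weighted_weyl_der \<alpha> f)"
  unfolding Lp_Ioi_def
proof
  have "(\<lambda>x. indicator {0<..} x *\<^sub>R weighted_weyl_der \<alpha> f x) \<in> borel_measurable borel"
    by (rule borel_measurable_continuous_on_indicator[OF _ weighted_weyl_der_continuous_on[OF assms(1,2)]]) simp
  then show meas: "set_borel_measurable lborel {0<..} (weighted_weyl_der \<alpha> f)"
    unfolding set_borel_measurable_def by simp
  obtain C where C: "\<And>s. s > 0 \<Longrightarrow> \<bar>weighted_weyl_der \<alpha> f s\<bar> \<le> C / (1+s)^2"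
    using weighted_weyl_der_decay[OF assms(1,2)] by blast
  show "set_integrable lborel {0<..} (\<lambda>s. \<bar>weighted_weyl_der \<alpha> f s\<bar> powr q)"
  proof (rule set_integrable_Ioi_kernel_bound[where b = 1 and M = "\<bar>C\<bar> powr q"])
    show "continuous_on {0<..} (\<lambda>s. \<bar>weighted_weyl_der \<alpha> f s\<bar> powr q)"
      using weighted_weyl_der_continuous_on[OF assms(1,2)] assms(3)
      by (intro continuous_on_powr' continuous_on_rabs continuous_on_const) auto
    fix u :: real assume u: "u > 0"
    have "C / (1+u)^2 \<le> \<bar>C\<bar> / (1+u)^2" by (intro divide_right_mono) auto
    then have "\<bar>weighted_weyl_der \<alpha> f u\<bar> \<le> \<bar>C\<bar> / (1+u)^2" using C[OF u] by linarith
    then have "\<bar>weighted_weyl_der \<alpha> f u\<bar> powr q \<le> (\<bar>C\<bar> / (1+u)^2) powr q"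
      using assms(3) by (intro powr_mono2) auto
    also have "\<dots> = \<bar>C\<bar> powr q / ((1+u)^2) powr q" by (simp add: powr_divide)
    also have "\<dots> \<le> \<bar>C\<bar> powr q / ((1+u)^2) powr 1"
      using u assms(3) by (intro divide_left_mono powr_mono) (auto simp: one_le_power)
    finally show "\<bar>\<bar>weighted_weyl_der \<alpha> f u\<bar> powr q\<bar> \<le> \<bar>C\<bar> powr q * (u powr (1 - 1) / (1 + u)^2)"
      using u by simp
  qed auto
qed

lemma tnorm_eq_Lp_norm_Ioi:
  "tnorm \<alpha> p h = Lp_norm_Ioi p (weighted_weyl_der \<alpha> h) / Gamma (\<alpha> + 1)"
proof -
  have "(LBINT s:{0<..}. \<bar>weyl_der \<alpha> h s\<bar> powr p * s powr (\<alpha> * p))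
      = (LBINT s:{0<..}. \<bar>weighted_weyl_der \<alpha> h s\<bar> powr p)"
    unfolding weighted_weyl_der_def
    by (intro set_lebesgue_integral_cong) (auto simp: abs_mult powr_mult powr_powr)
  then show ?thesis unfolding tnorm_def Lp_norm_Ioi_def by simp
qed

lemma tpair_eq_integral:
  "tpair \<alpha> f g = (LBINT s:{0<..}. weighted_weyl_der \<alpha> f s * weighted_weyl_der \<alpha> g s) / (Gamma (\<alpha> + 1))^2"
proof -
  have "(LBINT s:{0<..}. weyl_der \<alpha> f s * weyl_der \<alpha> g s * s powr (2 * \<alpha>))
      = (LBINT s:{0<..}. weighted_weyl_der \<alpha> f s * weighted_weyl_der \<alpha> g s)"
    unfolding weighted_weyl_der_def
    by (intro set_lebesgue_integral_cong) (auto simp: powr_add[symmetric] mult_ac)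
  then show ?thesis unfolding tpair_def by simp
qed

lemma tnorm_dilate:
  assumes "f \<in> schwartz_plus" "c > 0" "\<alpha> \<ge> 0" "q > 0"
  shows "tnorm \<alpha> q (\<lambda>s. a * f (c * s)) = \<bar>a\<bar> * c powr (-1/q) * tnorm \<alpha> q f"
proof -
  have "Lp_norm_Ioi q (weighted_weyl_der \<alpha> (\<lambda>s. a * f (c * s)))
      = Lp_norm_Ioi q (\<lambda>s. a * weighted_weyl_der \<alpha> f (c * s))"
    using weighted_weyl_der_dilate[OF assms(1-3)] by (intro Lp_norm_Ioi_cong) simp
  also have "\<dots> = \<bar>a\<bar> * c powr (-1/q) * Lp_norm_Ioi q (weighted_weyl_der \<alpha> f)"
    using Lp_norm_Ioi_scale[OF assms(4)] Lp_norm_Ioi_dilate[OF assms(2)] by simp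
  finally show ?thesis unfolding tnorm_eq_Lp_norm_Ioi by simp
qed

lemma Tneg_eq_dilate: "Tneg t q h = (\<lambda>s. exp (t / q) * h (exp t * s))"
  unfolding Tneg_def ..

lemma tnorm_Tneg:
  assumes "h \<in> schwartz_plus" "\<alpha> \<ge> 0" "q > 0"
  shows "tnorm \<alpha> q (Tneg t q h) = tnorm \<alpha> q h"
proof -
  have "exp (t / q) * exp t powr (-1/q) = 1"
    by (simp add: exp_powr_real flip: exp_add)
  then show ?thesis
    unfolding Tneg_eq_dilate using tnorm_dilate[OF assms(1) exp_gt_zero assms(2,3)] by simp
qed

lemma Lp_Cauchy_Ioi_of_tcauchy:
  assumes "tcauchy \<alpha> q f" "\<alpha> \<ge> 0" "q > 0"
  shows "Lp_Cauchy_Ioi q (\<lambda>n. weighted_weyl_der \<alpha> (f n))"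
  unfolding Lp_Cauchy_Ioi_def
proof (intro allI impI)
  fix e :: real assume e: "e > 0"
  have Gamma_pos: "Gamma (\<alpha> + 1) > 0" using assms(2) by (intro Gamma_real_pos) auto
  obtain N where N: "\<forall>m\<ge>N. \<forall>n\<ge>N. tnorm \<alpha> q (\<lambda>s. f m s - f n s) < e / Gamma (\<alpha> + 1)"
    using assms(1) e Gamma_pos unfolding tcauchy_def by (meson divide_pos_pos)
  have S: "f n \<in> schwartz_plus" for n using assms(1) unfolding tcauchy_def by blast
  have "Lp_norm_Ioi q (\<lambda>s. weighted_weyl_der \<alpha> (f m) s - weighted_weyl_der \<alpha> (f n) s)
      = Gamma (\<alpha> + 1) * tnorm \<alpha> q (\<lambda>s. f m s - f n s)" for m n
  proof -
    have "Lp_norm_Ioi q (\<lambda>s. weighted_weyl_der \<alpha> (f m) s - weighted_weyl_der \<alpha> (f n) s)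
        = Lp_norm_Ioi q (weighted_weyl_der \<alpha> (\<lambda>s. f m s - f n s))"
      by (rule Lp_norm_Ioi_cong) (simp add: weighted_weyl_der_diff[OF S S assms(2)])
    then show ?thesis unfolding tnorm_eq_Lp_norm_Ioi using Gamma_pos by simp
  qed
  then show "\<exists>N. \<forall>m\<ge>N. \<forall>n\<ge>N.
      Lp_norm_Ioi q (\<lambda>s. weighted_weyl_der \<alpha> (f m) s - weighted_weyl_der \<alpha> (f n) s) < e"
    using N Gamma_pos by (auto simp: pos_less_divide_eq mult.commute)
qed

lemma tcauchy_Tneg:
  assumes "tcauchy \<alpha> q g" "\<alpha> \<ge> 0" "q > 0"
  shows "tcauchy \<alpha> q (\<lambda>n. Tneg t q (g n))"
proof -
  have S: "g n \<in> schwartz_plus" for n using assms(1) unfolding tcauchy_def by blast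
  have "(\<lambda>s. Tneg t q (g m) s - Tneg t q (g n) s) = Tneg t q (\<lambda>s. g m s - g n s)" for m n
    unfolding Tneg_def by (simp add: fun_eq_iff right_diff_distrib)
  then have "tnorm \<alpha> q (\<lambda>s. Tneg t q (g m) s - Tneg t q (g n) s) = tnorm \<alpha> q (\<lambda>s. g m s - g n s)" for m n
    using tnorm_Tneg[OF schwartz_plus_diff[OF S S] assms(2,3)] by simp
  moreover have "Tneg t q (g n) \<in> schwartz_plus" for n
    unfolding Tneg_eq_dilate by (intro schwartz_plus_dilate S exp_gt_zero)
  ultimately show ?thesis using assms(1) unfolding tcauchy_def by simp
qed

lemma conjugate_exponent_gt_one:
  fixes p q :: real
  assumes "p > 1" "1/p + 1/q = 1"
  shows "q > 1"
proof -
  have "1/q = 1 - 1/p" "0 < 1/p" "1/p < 1" using assms by auto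
  then have "0 < 1/q" "1/q < 1" by linarith+
  then show ?thesis by (simp add: zero_less_divide_1_iff field_simps)
qed

lemma tpair_convergent:
  assumes "\<alpha> \<ge> 0" "p > 1" "1/p + 1/q = 1" "tcauchy \<alpha> p f" "tcauchy \<alpha> q g"
  shows "convergent (\<lambda>n. tpair \<alpha> (f n) (g n))"
proof -
  have q: "q > 1" by (rule conjugate_exponent_gt_one[OF assms(2,3)])
  have Sf: "f n \<in> schwartz_plus" and Sg: "g n \<in> schwartz_plus" for n
    using assms(4,5) unfolding tcauchy_def by blast+
  have dLp: "Lp_Ioi r (\<lambda>s. weighted_weyl_der \<alpha> (h m) s - weighted_weyl_der \<alpha> (h n) s)"
    if "\<And>n. h n \<in> schwartz_plus" "r \<ge> 1" for h :: "nat \<Rightarrow> real \<Rightarrow> real" and r m n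
    using Lp_Ioi_weighted_weyl_der[OF schwartz_plus_diff[OF that(1) that(1)] assms(1) that(2)]
          weighted_weyl_der_diff[OF that(1) that(1) assms(1)]
    by (simp cong: Lp_Ioi_cong)
  have "convergent (\<lambda>n. LBINT s:{0<..}. weighted_weyl_der \<alpha> (f n) s * weighted_weyl_der \<alpha> (g n) s)"
    using assms q
    by (intro convergent_pairing_of_Lp_Cauchy Lp_Ioi_weighted_weyl_der dLp Lp_Cauchy_Ioi_of_tcauchy Sf Sg)
       auto
  from convergent_mult[OF this convergent_const[of "1 / (Gamma (\<alpha> + 1))^2"]]
  show ?thesis unfolding tpair_eq_integral by simp
qed

lemma tpair_Tpos_Tneg:
  assumes "f \<in> schwartz_plus" "g \<in> schwartz_plus" "\<alpha> \<ge> 0" "1/p + 1/p' = 1"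
  shows "tpair \<alpha> (Tpos t p f) g = tpair \<alpha> f (Tneg t p' g)"
proof -
  define \<Phi> where "\<Phi> u = weighted_weyl_der \<alpha> f u * weighted_weyl_der \<alpha> g (exp t * u)" for u
  have exp_cancel: "exp t * (exp (- t) * s) = s" for s
    by (simp add: mult.assoc[symmetric] flip: exp_add)
  have "(LBINT s:{0<..}. weighted_weyl_der \<alpha> (Tpos t p f) s * weighted_weyl_der \<alpha> g s)
      = (LBINT s:{0<..}. exp (- t / p) * \<Phi> (exp (- t) * s))"
    unfolding Tpos_def \<Phi>_def
    by (intro set_lebesgue_integral_cong)
       (auto simp: weighted_weyl_der_dilate[OF assms(1) exp_gt_zero assms(3)] exp_cancel)
  also have "\<dots> = exp (- t / p) * exp t * (LBINT s:{0<..}. \<Phi> s)"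
    using set_integral_Ioi_dilate[OF exp_gt_zero, of \<Phi> "- t"] by (simp add: exp_minus field_simps)
  also have "exp (- t / p) * exp t = exp (t / p')"
  proof -
    have "t / p + t / p' = t" using arg_cong[OF assms(4), of "\<lambda>x. t * x"] by (simp add: distrib_left)
    then show ?thesis by (simp flip: exp_add)
  qed
  also have "exp (t / p') * (LBINT s:{0<..}. \<Phi> s) = (LBINT s:{0<..}. exp (t / p') * \<Phi> s)"
    by (rule set_integral_mult_right[symmetric])
  also have "\<dots> = (LBINT s:{0<..}. weighted_weyl_der \<alpha> f s * weighted_weyl_der \<alpha> (Tneg t p' g) s)"
    unfolding Tneg_def \<Phi>_def
    by (intro set_lebesgue_integral_cong)
       (auto simp: weighted_weyl_der_dilate[OF assms(2) exp_gt_zero assms(3)])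
  finally show ?thesis unfolding tpair_eq_integral by simp
qed

theorem proposition2p7:
  fixes \<alpha> p p' t :: real and f g :: "nat \<Rightarrow> real \<Rightarrow> real"
  assumes "\<alpha> \<ge> 0" and "1 < p" and "1 / p + 1 / p' = 1" and "t \<ge> 0"
    and "tcauchy \<alpha> p f" and "tcauchy \<alpha> p' g"
  shows "\<exists>L. (\<lambda>n. tpair \<alpha> (Tpos t p (f n)) (g n)) \<longlonglongrightarrow> L \<and>
             (\<lambda>n. tpair \<alpha> (f n) (Tneg t p' (g n))) \<longlonglongrightarrow> L"
proof -
  have "p' > 1" by (rule conjugate_exponent_gt_one[OF assms(2,3)])
  then have "tcauchy \<alpha> p' (\<lambda>n. Tneg t p' (g n))" by (intro tcauchy_Tneg assms(1,6)) simp
  then have "convergent (\<lambda>n. tpair \<alpha> (f n) (Tneg t p' (g n)))"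
    by (rule tpair_convergent[OF assms(1-3,5)])
  then obtain L where "(\<lambda>n. tpair \<alpha> (f n) (Tneg t p' (g n))) \<longlonglongrightarrow> L"
    unfolding convergent_def by blast
  moreover have "tpair \<alpha> (Tpos t p (f n)) (g n) = tpair \<alpha> (f n) (Tneg t p' (g n))" for n
    using assms(5,6) unfolding tcauchy_def by (intro tpair_Tpos_Tneg assms(1,3)) auto
  ultimately show ?thesis by auto
qed

end
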